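(* Let $q\in(0,1]$ and $L>0$. Assume: [A1] there exist $C_L>0$, $\varepsilon_L\in(0,1)$ with $P[\sup_{u\in V_T(r)}\mathbb Z_T(u)\ge\exp(-r^{2-\varepsilon_L})]\le C_L/r^L$ for all $r>0$, $T\in\mathbb T$; [A5] there exists $\lambda>0$ with $\lim_{x\to0}p(x)/|x|^q=\lambda$; [A6] for every $j\in\mathcal J^{(0)}$, $(\xi_T^j)^{-1/q}|\alpha_T^j|^{-1}\to0$ in probability; [A8] for all $M>0$, $\sup_{u\in\mathbb U_T,|u|<M}|\mathbb H_T(\theta^*+a_Tu)-\mathbb H_T(\theta^* )|=O_p(1)$; [A9] for all $M>0$, $\sup_{u,v\in\mathbb U_T,|u|,|v|<M,u\ne v}\frac{|\mathbb H_T(\theta^*+a_Tu)-\mathbb H_T(\theta^*+a_Tv)|}{|u-v|^q}=O_p(1)$. If $\hat u_T=a_T^{-1}(\hat\theta_T-\theta^* )=O_p(1)$, then $\tilde u_T=\tilde a_T^{-1}(\hat\theta_T-\theta^* )=O_p(1)$ as $T\to\infty$.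
   Context: Let $\Theta\subset\mathbb R^{\mathsf p}$ be a bounded open set with closure $\overline\Theta$ and $\theta^*\in\Theta$. Let $(\Omega,\mathcal F,P)$ be a probability space, $\mathbb T\subset\mathbb R_{\ge0}$ with $\sup\mathbb T=\infty$; limits $T\to\infty$ are along $\mathbb T$. For each $T\in\mathbb T$, $\mathbb H_T:\Omega\times\overline\Theta\to\mathbb R$ is a random field continuous in $\theta$ for every $\omega$. The penalty is $p_T(\theta)=\sum_{j=1}^{\mathsf p}\xi_T^jp(\theta_j)$ with (possibly random) $\xi_T^j>0$ and $p:\mathbb R\to\mathbb R_{\ge0}$, $p(0)=0$; $\mathbb H^\dagger_T=\mathbb H_T-p_T$, and $\hat\theta_T:\Omega\to\overline\Theta$ is measurable with $\mathbb H^\dagger_T(\hat\theta_T)=\max_{\overline\Theta}\mathbb H^\dagger_T$. $\mathcal J^{(0)}=\{j:\theta^*_j=0\}$, $\mathcal J^{(1)}=\{j:\theta^*_j\ne0\}$. $a_T=\mathrm{diag}(\alpha_T^1,\dots,\alpha_T^{\mathsf p})$ is deterministic, invertible, with $\|a_T\|\to0$ ($\|\cdot\|$ spectral norm). $\mathbb U_T=\{u:\theta^*+a_Tu\in\overline\Theta\}$, $\mathbb Z_T(u)=\exp(\mathbb H_T(\theta^*+a_Tu)-\mathbb H_T(\theta^* ))$, $V_T(r)=\{u\in\mathbb U_T:|u|\ge r\}$ (supremum over the empty set is $-\infty$). $\tilde a_T$ is diagonal with $(\tilde a_T)_{jj}=(\xi_T^j)^{-1/q}$ for $j\in\mathcal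 J^{(0)}$ and $\alpha_T^j$ for $j\in\mathcal J^{(1)}$. $X_T=O_p(1)$ means tightness: for every $\epsilon>0$ there are $\mathcal T\in\mathbb T$, $M>0$ with $P(|X_T|>M)<\epsilon$ for $T\ge\mathcal T$. *)

theory Defs
  imports "HOL-Probability.Probability"
begin

definition Op1 :: "'a measure \<Rightarrow> real set \<Rightarrow> (real \<Rightarrow> 'a \<Rightarrow> ereal) \<Rightarrow> bool" where
  "Op1 M TT X \<longleftrightarrow> (\<forall>\<epsilon>>0. \<exists>T0\<in>TT. \<exists>K>0. \<forall>T\<in>TT. T \<ge> T0 \<longrightarrow>
      measure M {\<omega> \<in> space M. \<bar>X T \<omega>\<bar> > ereal K} < \<epsilon>)"

definition to_zero_in_prob :: "'a measure \<Rightarrow> real set \<Rightarrow> (real \<Rightarrow> 'a \<Rightarrow> real) \<Rightarrow> bool" where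
  "to_zero_in_prob M TT X \<longleftrightarrow> (\<forall>\<eta>>0. \<forall>\<epsilon>>0. \<exists>T0\<in>TT. \<forall>T\<in>TT. T \<ge> T0 \<longrightarrow>
      measure M {\<omega> \<in> space M. \<bar>X T \<omega>\<bar> > \<eta>} < \<epsilon>)"

definition along :: "real set \<Rightarrow> real filter" where
  "along TT = inf at_top (principal TT)"

definition diagm :: "('n::finite \<Rightarrow> real) \<Rightarrow> real^'n \<Rightarrow> real^'n" where
  "diagm d u = (\<chi> j. d j * u $ j)"

end

theory Submission
  imports Defs
begin

(* Write J0 for the coordinates with theta*_j = 0 and n for the dimension. Fix the event on which
   |u_hat| <= K1, the Hoelder modulus of u |-> H_T(theta* + a_T u) on the (K1 + 1)-ball is at most K2,
   and (xi_T^j)^(-1/q) / |alpha_T^j| <= eta for all j in J0. There the estimator vanishes exactly on J0: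
   zeroing its J0-coordinates stays in Theta (as a_T -> 0), saves at least (lambda/2) m^q of penalty,
   where m = max over j in J0 of (xi_T^j)^(1/q) |theta_hat_j|, and costs at most K2 (n eta m)^q of H_T,
   so m = 0 once K2 (n eta)^q < lambda/2. Hence u_tilde agrees with u_hat off J0 and vanishes on J0, and
   the exceptional events are small by the tightness of u_hat, [A9] and [A6]. *)

lemma Op1_iff_eventually:
  assumes unbounded: "\<forall>x. \<exists>T\<in>TT. T \<ge> x"
  shows "Op1 M TT X \<longleftrightarrow> (\<forall>\<epsilon>>0. \<exists>K>0.
    eventually (\<lambda>T. measure M {\<omega> \<in> space M. \<bar>X T \<omega>\<bar> > ereal K} < \<epsilon>) (along TT))"
proof -
  have eq: "(\<exists>T0\<in>TT. \<forall>T\<in>TT. T \<ge> T0 \<longrightarrow> P T) \<longleftrightarrow> eventually P (along TT)" for P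
  proof
    assume "\<exists>T0\<in>TT. \<forall>T\<in>TT. T \<ge> T0 \<longrightarrow> P T"
    then show "eventually P (along TT)"
      unfolding along_def eventually_inf_principal eventually_at_top_linorder by blast
  next
    assume "eventually P (along TT)"
    then obtain N where "\<forall>T\<ge>N. T \<in> TT \<longrightarrow> P T"
      unfolding along_def eventually_inf_principal eventually_at_top_linorder by blast
    moreover obtain T0 where "T0 \<in> TT" "T0 \<ge> N" using unbounded by blast
    ultimately show "\<exists>T0\<in>TT. \<forall>T\<in>TT. T \<ge> T0 \<longrightarrow> P T"
      by (intro bexI[of _ T0]) auto
  qed
  have "Op1 M TT X \<longleftrightarrow> (\<forall>\<epsilon>>0. \<exists>K>0. \<exists>T0\<in>TT. \<forall>T\<in>TT. T \<ge> T0 \<longrightarrow>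
      measure M {\<omega> \<in> space M. \<bar>X T \<omega>\<bar> > ereal K} < \<epsilon>)"
    unfolding Op1_def by blast
  then show ?thesis by (simp only: eq)
qed

lemma to_zero_in_prob_eventually:
  assumes "to_zero_in_prob M TT X" "\<eta> > 0" "\<epsilon> > 0"
  shows "eventually (\<lambda>T. measure M {\<omega> \<in> space M. \<bar>X T \<omega>\<bar> > \<eta>} < \<epsilon>) (along TT)"
  using assms unfolding to_zero_in_prob_def along_def eventually_inf_principal eventually_at_top_linorder
  by blast

lemma eventually_along_mem: "eventually (\<lambda>T. T \<in> TT) (along TT)"
  by (simp add: along_def eventually_inf_principal)

lemma (in prob_space) prob_exceed_le_controlled:
  fixes X Y S :: "'a \<Rightarrow> ereal" and R :: "'j \<Rightarrow> 'a \<Rightarrow> real"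
  assumes "finite J" and [measurable]: "Y \<in> borel_measurable M" "S \<in> borel_measurable M"
    and R_meas: "\<And>j. j \<in> J \<Longrightarrow> R j \<in> borel_measurable M"
    and control: "\<forall>\<omega>\<in>space M. \<bar>Y \<omega>\<bar> \<le> ereal K1 \<longrightarrow> \<bar>S \<omega>\<bar> \<le> ereal K2 \<longrightarrow> (\<forall>j\<in>J. \<bar>R j \<omega>\<bar> \<le> \<eta>)
      \<longrightarrow> \<bar>X \<omega>\<bar> \<le> ereal K1"
  shows "prob {\<omega> \<in> space M. \<bar>X \<omega>\<bar> > ereal K1} \<le> prob {\<omega> \<in> space M. \<bar>Y \<omega>\<bar> > ereal K1}
    + prob {\<omega> \<in> space M. \<bar>S \<omega>\<bar> > ereal K2} + (\<Sum>j\<in>J. prob {\<omega> \<in> space M. \<bar>R j \<omega>\<bar> > \<eta>})"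
proof -
  let ?A = "{\<omega> \<in> space M. \<bar>Y \<omega>\<bar> > ereal K1}" and ?B = "{\<omega> \<in> space M. \<bar>S \<omega>\<bar> > ereal K2}"
    and ?C = "\<lambda>j. {\<omega> \<in> space M. \<bar>R j \<omega>\<bar> > \<eta>}"
  have AB_sets: "?A \<in> events" "?B \<in> events" by measurable
  have C_sets: "?C j \<in> events" if "j \<in> J" for j
  proof -
    have [measurable]: "R j \<in> borel_measurable M" using that by (rule R_meas)
    show ?thesis by measurable
  qed
  have "{\<omega> \<in> space M. \<bar>X \<omega>\<bar> > ereal K1} \<subseteq> ?A \<union> ?B \<union> (\<Union>j\<in>J. ?C j)"
    using control by (auto simp: not_less)
  moreover have "(\<Union>j\<in>J. ?C j) \<in> events" using C_sets \<open>finite J\<close> by blast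
  ultimately have "prob {\<omega> \<in> space M. \<bar>X \<omega>\<bar> > ereal K1} \<le> prob (?A \<union> ?B \<union> (\<Union>j\<in>J. ?C j))"
    using AB_sets by (intro finite_measure_mono) auto
  also have "\<dots> \<le> prob ?A + prob ?B + prob (\<Union>j\<in>J. ?C j)"
    using AB_sets \<open>(\<Union>j\<in>J. ?C j) \<in> events\<close>
    by (intro order.trans[OF measure_Un_le add_right_mono[OF measure_Un_le]]) auto
  also have "prob (\<Union>j\<in>J. ?C j) \<le> (\<Sum>j\<in>J. prob (?C j))"
    using C_sets \<open>finite J\<close> by (intro measure_UNION_le) auto
  finally show ?thesis by simp
qed

lemma Op1_from_control:
  fixes Y X :: "real \<Rightarrow> 'a \<Rightarrow> ereal" and S :: "real \<Rightarrow> real \<Rightarrow> 'a \<Rightarrow> ereal"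
    and R :: "'j \<Rightarrow> real \<Rightarrow> 'a \<Rightarrow> real"
  assumes "prob_space M" and unbounded: "\<forall>x. \<exists>T\<in>TT. T \<ge> x" and "finite J"
    and Y: "Op1 M TT Y" and S: "\<And>K. K > 0 \<Longrightarrow> Op1 M TT (S K)"
    and R: "\<And>j. j \<in> J \<Longrightarrow> to_zero_in_prob M TT (R j)"
    and Y_meas: "\<And>T. T \<in> TT \<Longrightarrow> Y T \<in> borel_measurable M"
    and S_meas: "\<And>K T. K > 0 \<Longrightarrow> T \<in> TT \<Longrightarrow> S K T \<in> borel_measurable M"
    and R_meas: "\<And>j T. j \<in> J \<Longrightarrow> T \<in> TT \<Longrightarrow> R j T \<in> borel_measurable M"
    and control: "\<And>K1 K2. K1 > 0 \<Longrightarrow> K2 > 0 \<Longrightarrow> \<exists>\<eta>>0. eventually (\<lambda>T. \<forall>\<omega>\<in>space M.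
      \<bar>Y T \<omega>\<bar> \<le> ereal K1 \<longrightarrow> \<bar>S K1 T \<omega>\<bar> \<le> ereal K2 \<longrightarrow> (\<forall>j\<in>J. \<bar>R j T \<omega>\<bar> \<le> \<eta>)
        \<longrightarrow> \<bar>X T \<omega>\<bar> \<le> ereal K1) (along TT)"
  shows "Op1 M TT X"
proof -
  interpret prob_space M by fact
  show ?thesis unfolding Op1_iff_eventually[OF unbounded]
  proof (intro allI impI)
    fix \<epsilon> :: real assume "\<epsilon> > 0"
    then have "\<epsilon> / 3 > 0" by simp
    obtain K1 where "K1 > 0" and Y_small:
      "eventually (\<lambda>T. prob {\<omega> \<in> space M. \<bar>Y T \<omega>\<bar> > ereal K1} < \<epsilon> / 3) (along TT)"
      using Y \<open>\<epsilon> / 3 > 0\<close> unfolding Op1_iff_eventually[OF unbounded] by blast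
    obtain K2 where "K2 > 0" and S_small:
      "eventually (\<lambda>T. prob {\<omega> \<in> space M. \<bar>S K1 T \<omega>\<bar> > ereal K2} < \<epsilon> / 3) (along TT)"
      using S[OF \<open>K1 > 0\<close>] \<open>\<epsilon> / 3 > 0\<close> unfolding Op1_iff_eventually[OF unbounded] by blast
    obtain \<eta> where "\<eta> > 0" and X_bound: "eventually (\<lambda>T. \<forall>\<omega>\<in>space M.
      \<bar>Y T \<omega>\<bar> \<le> ereal K1 \<longrightarrow> \<bar>S K1 T \<omega>\<bar> \<le> ereal K2 \<longrightarrow> (\<forall>j\<in>J. \<bar>R j T \<omega>\<bar> \<le> \<eta>)
        \<longrightarrow> \<bar>X T \<omega>\<bar> \<le> ereal K1) (along TT)"
      using control[OF \<open>K1 > 0\<close> \<open>K2 > 0\<close>] by blast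
    define \<delta> where "\<delta> = \<epsilon> / (3 * (card J + 1))"
    have "\<delta> > 0" using \<open>\<epsilon> > 0\<close> by (simp add: \<delta>_def)
    have "card J * \<delta> < \<epsilon> / 3" using \<open>\<epsilon> > 0\<close> by (simp add: \<delta>_def field_simps)
    have R_small: "eventually (\<lambda>T. \<forall>j\<in>J. prob {\<omega> \<in> space M. \<bar>R j T \<omega>\<bar> > \<eta>} < \<delta>) (along TT)"
      using R \<open>\<eta> > 0\<close> \<open>\<delta> > 0\<close> by (intro eventually_ball_finite \<open>finite J\<close> ballI to_zero_in_prob_eventually) auto
    have "eventually (\<lambda>T. prob {\<omega> \<in> space M. \<bar>X T \<omega>\<bar> > ereal K1} < \<epsilon>) (along TT)"
      using eventually_along_mem Y_small S_small R_small X_bound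
    proof eventually_elim
      case (elim T)
      have "prob {\<omega> \<in> space M. \<bar>X T \<omega>\<bar> > ereal K1} \<le> prob {\<omega> \<in> space M. \<bar>Y T \<omega>\<bar> > ereal K1}
          + prob {\<omega> \<in> space M. \<bar>S K1 T \<omega>\<bar> > ereal K2} + (\<Sum>j\<in>J. prob {\<omega> \<in> space M. \<bar>R j T \<omega>\<bar> > \<eta>})"
        using elim(1,5) \<open>K1 > 0\<close>
        by (intro prob_exceed_le_controlled \<open>finite J\<close> Y_meas S_meas R_meas)
      also have "(\<Sum>j\<in>J. prob {\<omega> \<in> space M. \<bar>R j T \<omega>\<bar> > \<eta>}) \<le> card J * \<delta>"
        using elim(4) sum_bounded_above[of J _ \<delta>] by (simp add: less_imp_le)
      finally show ?case using elim(2,3) \<open>card J * \<delta> < \<epsilon> / 3\<close> by linarith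
    qed
    then show "\<exists>K>0. eventually (\<lambda>T. prob {\<omega> \<in> space M. \<bar>X T \<omega>\<bar> > ereal K} < \<epsilon>) (along TT)"
      using \<open>K1 > 0\<close> by blast
  qed
qed

lemma borel_measurable_SUP_continuous_on:
  fixes f :: "'a \<Rightarrow> 'b::{metric_space, second_countable_topology} \<Rightarrow> real"
  assumes cont: "\<And>\<omega>. \<omega> \<in> space M \<Longrightarrow> continuous_on D (f \<omega>)"
    and meas: "\<And>d. d \<in> D \<Longrightarrow> (\<lambda>\<omega>. f \<omega> d) \<in> borel_measurable M"
  shows "(\<lambda>\<omega>. SUP d\<in>D. ereal (f \<omega> d)) \<in> borel_measurable M"
proof -
  obtain D0 where D0: "countable D0" "D0 \<subseteq> D" "D \<subseteq> closure D0"
    using separable by blast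
  have "(SUP d\<in>D. ereal (f \<omega> d)) = (SUP d\<in>D0. ereal (f \<omega> d))" if \<omega>: "\<omega> \<in> space M" for \<omega>
  proof (rule antisym)
    show "(SUP d\<in>D. ereal (f \<omega> d)) \<le> (SUP d\<in>D0. ereal (f \<omega> d))"
    proof (rule SUP_least, rule ccontr)
      fix x assume x: "x \<in> D" and "\<not> ereal (f \<omega> x) \<le> (SUP d\<in>D0. ereal (f \<omega> d))"
      then obtain a where a: "(SUP d\<in>D0. ereal (f \<omega> d)) < ereal a" "a < f \<omega> x"
        by (metis ereal_dense2 ereal_less(1) less_ereal.simps(1) linorder_not_le)
      obtain A where A: "open A" "A \<inter> D = f \<omega> -` {a<..} \<inter> D"
        using cont[OF \<omega>] unfolding continuous_on_open_invariant by (meson open_greaterThan)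
      have "x \<in> A" "x \<in> closure D0" using A(2) x a(2) D0(3) by auto
      then obtain d where "d \<in> D0" "d \<in> A"
        using A(1) unfolding closure_iff_nhds_not_empty by blast
      then have "ereal a < ereal (f \<omega> d)" using A(2) D0(2) by auto
      also have "\<dots> \<le> (SUP d\<in>D0. ereal (f \<omega> d))" using \<open>d \<in> D0\<close> by (rule SUP_upper)
      finally show False using a(1) by simp
    qed
  qed (use D0(2) in \<open>rule SUP_subset_mono, simp\<close>)
  moreover have "(\<lambda>\<omega>. SUP d\<in>D0. ereal (f \<omega> d)) \<in> borel_measurable M"
    using D0 meas by (intro borel_measurable_SUP) auto
  ultimately show ?thesis by (simp cong: measurable_cong)
qed

lemma bounded_linear_diagm: "bounded_linear (diagm d)"
  unfolding diagm_def
  by (rule linear_conv_bounded_linear[THEN iffD1], rule linearI) (auto simp: vec_eq_iff algebra_simps)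

lemma continuous_on_diagm [continuous_intros]:
  "continuous_on S f \<Longrightarrow> continuous_on S (\<lambda>x. diagm d (f x))"
  by (rule bounded_linear.continuous_on[OF bounded_linear_diagm])

lemma borel_measurable_norm_rescaled:
  fixes f :: "'a \<Rightarrow> real^'n"
  assumes "f \<in> borel_measurable M"
  shows "(\<lambda>\<omega>. norm (\<chi> j. (f \<omega> $ j - c $ j) / d j)) \<in> borel_measurable M"
proof -
  have "continuous_on UNIV (\<lambda>x::real^'n. norm (\<chi> j. (x $ j - c $ j) * inverse (d j)))"
    by (intro continuous_intros)
  from borel_measurable_continuous_on[OF this assms] show ?thesis by (simp add: divide_inverse)
qed

definition hoelder_modulus :: "('a::real_normed_vector \<Rightarrow> real) \<Rightarrow> 'a set \<Rightarrow> real \<Rightarrow> ereal" where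
  "hoelder_modulus f D q =
    (SUP (u, v)\<in>{(u, v). u \<in> D \<and> v \<in> D \<and> u \<noteq> v}. ereal (\<bar>f u - f v\<bar> / norm (u - v) powr q))"

lemma hoelder_modulus_bound:
  assumes "hoelder_modulus f D q \<le> ereal K" "u \<in> D" "v \<in> D"
  shows "\<bar>f u - f v\<bar> \<le> K * norm (u - v) powr q"
proof (cases "u = v")
  case False
  have "ereal (\<bar>f u - f v\<bar> / norm (u - v) powr q) \<le> hoelder_modulus f D q"
    unfolding hoelder_modulus_def using assms(2,3) False by (intro SUP_upper2[of "(u, v)"]) auto
  then have "ereal (\<bar>f u - f v\<bar> / norm (u - v) powr q) \<le> ereal K" using assms(1) by (rule order_trans)
  then have "\<bar>f u - f v\<bar> / norm (u - v) powr q \<le> K" by simp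
  then show ?thesis using False by (simp add: divide_le_eq)
qed simp

lemma borel_measurable_hoelder_modulus:
  fixes f :: "'a \<Rightarrow> 'b::{real_normed_vector, second_countable_topology} \<Rightarrow> real"
  assumes cont: "\<And>\<omega>. \<omega> \<in> space M \<Longrightarrow> continuous_on D (f \<omega>)"
    and meas: "\<And>u. u \<in> D \<Longrightarrow> (\<lambda>\<omega>. f \<omega> u) \<in> borel_measurable M"
  shows "(\<lambda>\<omega>. hoelder_modulus (f \<omega>) D q) \<in> borel_measurable M"
proof -
  let ?E = "{(u, v). u \<in> D \<and> v \<in> D \<and> u \<noteq> v}"
  have "(\<lambda>\<omega>. SUP d\<in>?E. ereal (\<bar>f \<omega> (fst d) - f \<omega> (snd d)\<bar> / norm (fst d - snd d) powr q))
    \<in> borel_measurable M"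
  proof (rule borel_measurable_SUP_continuous_on)
    fix \<omega> assume "\<omega> \<in> space M"
    then have "continuous_on ?E (\<lambda>d. f \<omega> (fst d))" "continuous_on ?E (\<lambda>d. f \<omega> (snd d))"
      by (auto intro!: continuous_on_compose2[OF cont] continuous_on_fst continuous_on_snd continuous_on_id)
    then show "continuous_on ?E (\<lambda>d. \<bar>f \<omega> (fst d) - f \<omega> (snd d)\<bar> / norm (fst d - snd d) powr q)"
      by (auto intro!: continuous_intros)
  qed (use meas in \<open>auto intro!: borel_measurable_divide borel_measurable_abs borel_measurable_diff\<close>)
  then show ?thesis by (simp add: hoelder_modulus_def case_prod_beta)
qed

lemma borel_measurable_hoelder_modulus_comp:
  fixes H :: "'a \<Rightarrow> 'c::topological_space \<Rightarrow> real"
    and g :: "'b::{real_normed_vector, second_countable_topology} \<Rightarrow> 'c"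
  assumes "\<And>\<omega>. \<omega> \<in> space M \<Longrightarrow> continuous_on C (H \<omega>)"
    and "\<And>x. x \<in> C \<Longrightarrow> (\<lambda>\<omega>. H \<omega> x) \<in> borel_measurable M"
    and "continuous_on D g" "g ` D \<subseteq> C"
  shows "(\<lambda>\<omega>. hoelder_modulus (\<lambda>u. H \<omega> (g u)) D q) \<in> borel_measurable M"
proof (rule borel_measurable_hoelder_modulus)
  show "continuous_on D (\<lambda>u. H \<omega> (g u))" if "\<omega> \<in> space M" for \<omega>
    using continuous_on_compose2[OF assms(1)[OF that] assms(3,4)] .
qed (use assms(2,4) in blast)

lemma penalty_lower_bound_near_zero:
  fixes p :: "real \<Rightarrow> real"
  assumes lim: "((\<lambda>x. p x / \<bar>x\<bar> powr q) \<longlongrightarrow> lam) (at 0)" and "c < lam" and "p 0 \<ge> 0"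
  obtains \<delta> where "\<delta> > 0" "\<And>x. \<bar>x\<bar> < \<delta> \<Longrightarrow> c * \<bar>x\<bar> powr q \<le> p x"
proof -
  have "eventually (\<lambda>x. c < p x / \<bar>x\<bar> powr q) (at 0)"
    using order_tendstoD(1)[OF lim \<open>c < lam\<close>] .
  then obtain \<delta> where "\<delta> > 0" and near: "\<And>x. x \<noteq> 0 \<Longrightarrow> \<bar>x\<bar> < \<delta> \<Longrightarrow> c < p x / \<bar>x\<bar> powr q"
    unfolding eventually_at by (auto simp: dist_real_def)
  moreover have "c * \<bar>x\<bar> powr q \<le> p x" if "\<bar>x\<bar> < \<delta>" for x
  proof (cases "x = 0")
    case False
    then show ?thesis using near[OF False that] by (simp add: less_divide_eq less_imp_le)
  qed (use \<open>p 0 \<ge> 0\<close> in simp)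
  ultimately show ?thesis using that by blast
qed

lemma penalized_maximizer_projection_gain:
  fixes Hw :: "real^'n \<Rightarrow> real" and xi :: "'n \<Rightarrow> real" and p :: "real \<Rightarrow> real"
  assumes max: "\<forall>\<theta>\<in>S. Hw \<theta> - (\<Sum>j\<in>UNIV. xi j * p (\<theta> $ j))
      \<le> Hw th - (\<Sum>j\<in>UNIV. xi j * p (th $ j))"
    and proj: "(\<chi> j. if j \<in> J then 0 else th $ j) \<in> S" and "p 0 = 0"
  shows "(\<Sum>j\<in>J. xi j * p (th $ j)) \<le> Hw th - Hw (\<chi> j. if j \<in> J then 0 else th $ j)"
proof -
  have "(\<Sum>j\<in>UNIV. xi j * p ((\<chi> j. if j \<in> J then 0 else th $ j) $ j))
      = (\<Sum>j\<in>UNIV. xi j * p (th $ j)) - (\<Sum>j\<in>J. xi j * p (th $ j))"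
    using \<open>p 0 = 0\<close> sum.subset_diff[of J UNIV "\<lambda>j. xi j * p (th $ j)"]
    by (simp add: if_distrib sum.If_cases Compl_eq_Diff_UNIV)
  then show ?thesis using max[rule_format, OF proj] by linarith
qed

lemma norm_le_card_mult:
  fixes v :: "real^'n" and b :: real
  assumes "\<And>i. \<bar>v $ i\<bar> \<le> b"
  shows "norm v \<le> CARD('n) * b"
proof -
  have "(\<Sum>i\<in>UNIV. \<bar>v $ i\<bar>) \<le> CARD('n) * b"
    using assms by (intro sum_bounded_above[of UNIV, simplified])
  then show ?thesis by (rule order_trans[OF norm_le_l1_cart])
qed

lemma weighted_penalty_le_sum:
  fixes th :: "real^'n" and p :: "real \<Rightarrow> real" and c :: real
  assumes "j0 \<in> J" and xi: "\<forall>j\<in>J. xi j > 0"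
    and lower: "\<forall>j\<in>J. c * \<bar>th $ j\<bar> powr q \<le> p (th $ j)" and "c \<ge> 0" "q > 0"
  shows "c * (xi j0 powr (1/q) * \<bar>th $ j0\<bar>) powr q \<le> (\<Sum>j\<in>J. xi j * p (th $ j))"
proof -
  have nonneg: "0 \<le> xi j * p (th $ j)" if "j \<in> J" for j
  proof -
    have "0 \<le> c * \<bar>th $ j\<bar> powr q" using \<open>c \<ge> 0\<close> by simp
    also have "\<dots> \<le> p (th $ j)" using lower that by blast
    finally show ?thesis using xi that by (simp add: less_imp_le)
  qed
  have "c * (xi j0 powr (1/q) * \<bar>th $ j0\<bar>) powr q = xi j0 * (c * \<bar>th $ j0\<bar> powr q)"
    using xi[rule_format, OF \<open>j0 \<in> J\<close>] \<open>q > 0\<close> by (simp add: powr_mult powr_powr)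
  also have "\<dots> \<le> xi j0 * p (th $ j0)"
    using xi lower \<open>j0 \<in> J\<close> by (intro mult_left_mono) (auto intro: less_imp_le)
  also have "\<dots> \<le> (\<Sum>j\<in>J. xi j * p (th $ j))"
    using nonneg \<open>j0 \<in> J\<close> by (intro member_le_sum) auto
  finally show ?thesis .
qed

lemma coordinates_vanish_if_penalty_dominated:
  fixes th :: "real^'n" and p :: "real \<Rightarrow> real" and c K \<eta> :: real
  assumes saving: "(\<Sum>j\<in>J. xi j * p (th $ j)) \<le> K * norm (\<chi> j. if j \<in> J then th $ j / al j else 0) powr q"
    and xi: "\<forall>j\<in>J. xi j > 0"
    and lower: "\<forall>j\<in>J. c * \<bar>th $ j\<bar> powr q \<le> p (th $ j)"
    and ratio: "\<forall>j\<in>J. xi j powr (-1/q) * inverse \<bar>al j\<bar> \<le> \<eta>"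
    and small: "K * (CARD('n) * \<eta>) powr q < c" and "K \<ge> 0" "q > 0"
  shows "\<forall>j\<in>J. th $ j = 0"
proof (cases "J = {}")
  case False
  \<comment> \<open>the weight for which the penalty of coordinate j is at least c (w j)^q and its rescaled
      displacement is at most \<eta> (w j)\<close>
  define w where "w j = xi j powr (1/q) * \<bar>th $ j\<bar>" for j
  define m where "m = Max (w ` J)"
  have w_le: "w j \<le> m" if "j \<in> J" for j using that unfolding m_def by simp
  have "m \<in> w ` J" unfolding m_def using False by (intro Max_in) auto
  then obtain j0 where j0: "j0 \<in> J" "w j0 = m" by auto
  have w_ge: "w j \<ge> 0" for j unfolding w_def by simp
  then have "m \<ge> 0" using j0 by metis
  have "0 \<le> K * (CARD('n) * \<eta>) powr q" using \<open>K \<ge> 0\<close> by simp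
  then have "c > 0" using small by linarith
  have "0 \<le> xi j0 powr (-1/q) * inverse \<bar>al j0\<bar>" by simp
  then have "\<eta> \<ge> 0" using ratio j0(1) by (blast intro: order_trans)
  have coord: "\<bar>th $ j / al j\<bar> \<le> \<eta> * m" if "j \<in> J" for j
  proof -
    have "xi j powr (1/q) * xi j powr (-1/q) = 1"
      using xi[rule_format, OF that] by (simp flip: powr_add)
    then have "\<bar>th $ j / al j\<bar> = (xi j powr (1/q) * xi j powr (-1/q)) * (\<bar>th $ j\<bar> * inverse \<bar>al j\<bar>)"
      by (simp add: abs_mult abs_inverse divide_inverse)
    also have "\<dots> = w j * (xi j powr (-1/q) * inverse \<bar>al j\<bar>)" by (simp add: w_def mult_ac)
    also have "\<dots> \<le> m * \<eta>" using w_le w_ge ratio that \<open>m \<ge> 0\<close> by (intro mult_mono) auto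
    finally show ?thesis by (simp add: mult.commute)
  qed
  have "c * m powr q \<le> (\<Sum>j\<in>J. xi j * p (th $ j))"
    using weighted_penalty_le_sum[OF j0(1) xi lower _ \<open>q > 0\<close>] j0 \<open>c > 0\<close> by (simp add: w_def)
  also have "\<dots> \<le> K * norm (\<chi> j. if j \<in> J then th $ j / al j else 0) powr q" by (rule saving)
  also have "\<dots> \<le> K * (CARD('n) * (\<eta> * m)) powr q"
    using coord \<open>\<eta> \<ge> 0\<close> \<open>m \<ge> 0\<close> \<open>K \<ge> 0\<close> \<open>q > 0\<close>
    by (intro mult_left_mono powr_mono2 norm_le_card_mult) auto
  also have "\<dots> = K * (CARD('n) * \<eta>) powr q * m powr q"
    using \<open>\<eta> \<ge> 0\<close> \<open>m \<ge> 0\<close> by (simp add: powr_mult)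
  finally have le: "c * m powr q \<le> K * (CARD('n) * \<eta>) powr q * m powr q" .
  have "\<not> m powr q > 0"
  proof
    assume "m powr q > 0"
    from mult_strict_right_mono[OF small this] show False using le by linarith
  qed
  then have "m = 0" using \<open>m \<ge> 0\<close> by simp
  show ?thesis
  proof
    fix j assume "j \<in> J"
    then have "w j = 0" using w_le w_ge \<open>m = 0\<close> by (simp add: order_antisym)
    then show "th $ j = 0" using xi[rule_format, OF \<open>j \<in> J\<close>] by (simp add: w_def)
  qed
qed simp

lemma rescaled_penalized_maximizer_norm_le:
  fixes Hw :: "real^'n \<Rightarrow> real" and xi al :: "'n \<Rightarrow> real" and p :: "real \<Rightarrow> real"
    and c K1 K2 \<eta> :: real
  assumes th: "th \<in> C"
    and max: "\<forall>\<theta>\<in>C. Hw \<theta> - (\<Sum>j\<in>UNIV. xi j * p (\<theta> $ j))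
      \<le> Hw th - (\<Sum>j\<in>UNIV. xi j * p (th $ j))"
    and al: "\<forall>j. al j \<noteq> 0" and xi: "\<forall>j. xi j > 0"
    and ball: "ball \<theta>s r \<subseteq> C"
    and lower: "\<forall>x. \<bar>x\<bar> < \<delta> \<longrightarrow> c * \<bar>x\<bar> powr q \<le> p x" and "p 0 = 0"
    and scale: "onorm (diagm al) * K1 < min r \<delta>"
    and uh: "norm (\<chi> j. (th $ j - \<theta>s $ j) / al j) \<le> K1" and "K1 < R"
    and hoelder: "hoelder_modulus (\<lambda>u. Hw (\<theta>s + diagm al u)) {u. \<theta>s + diagm al u \<in> C \<and> norm u < R} q \<le> ereal K2"
    and ratio: "\<forall>j. \<theta>s $ j = 0 \<longrightarrow> xi j powr (-1/q) * inverse \<bar>al j\<bar> \<le> \<eta>"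
    and small: "K2 * (CARD('n) * \<eta>) powr q < c" and "K2 \<ge> 0" "q > 0"
  shows "norm (\<chi> j. (th $ j - \<theta>s $ j) / (if \<theta>s $ j = 0 then xi j powr (-1/q) else al j)) \<le> K1"
proof -
  define J where "J = {j. \<theta>s $ j = 0}"
  define tb where "tb = (\<chi> j. if j \<in> J then 0 else th $ j)"
  define uh where "uh = (\<chi> j. (th $ j - \<theta>s $ j) / al j)"
  define ub where "ub = (\<chi> j. (tb $ j - \<theta>s $ j) / al j)"
  have th_eq: "\<theta>s + diagm al uh = th" and tb_eq: "\<theta>s + diagm al ub = tb"
    using al by (simp_all add: vec_eq_iff diagm_def uh_def ub_def)
  have "norm (th - \<theta>s) \<le> onorm (diagm al) * norm uh"
    using onorm[OF bounded_linear_diagm] th_eq by (metis add_diff_cancel_left')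
  also have "\<dots> \<le> onorm (diagm al) * K1"
    using uh onorm_pos_le[OF bounded_linear_diagm] unfolding uh_def by (rule mult_left_mono)
  finally have near: "norm (th - \<theta>s) < min r \<delta>" using scale by linarith
  have "norm (tb - \<theta>s) \<le> norm (th - \<theta>s)"
    by (rule norm_le_componentwise_cart) (simp add: tb_def J_def)
  then have tb: "tb \<in> C" using near ball by (auto simp: dist_norm norm_minus_commute)
  have "\<bar>th $ j\<bar> < \<delta>" if "j \<in> J" for j
    using component_le_norm_cart[of "th - \<theta>s" j] near that by (simp add: J_def)
  then have lower_J: "\<forall>j\<in>J. c * \<bar>th $ j\<bar> powr q \<le> p (th $ j)" using lower by blast
  have displacement: "uh - ub = (\<chi> j. if j \<in> J then th $ j / al j else 0)"
    by (simp add: vec_eq_iff uh_def ub_def tb_def J_def diff_divide_distrib)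
  have "norm ub \<le> norm uh"
    by (rule norm_le_componentwise_cart) (simp add: uh_def ub_def tb_def J_def)
  then have "Hw th - Hw tb \<le> K2 * norm (uh - ub) powr q"
    using hoelder_modulus_bound[OF hoelder, of uh ub] th tb th_eq tb_eq uh \<open>K1 < R\<close>
    unfolding uh_def[symmetric] by simp
  then have "\<forall>j\<in>J. th $ j = 0"
    using penalized_maximizer_projection_gain[OF max[unfolded tb_def] tb[unfolded tb_def] \<open>p 0 = 0\<close>]
    unfolding tb_def displacement
    by (intro coordinates_vanish_if_penalty_dominated[OF _ _ lower_J _ small \<open>K2 \<ge> 0\<close> \<open>q > 0\<close>])
      (use xi ratio in \<open>auto simp: J_def\<close>)
  then have "norm (\<chi> j. (th $ j - \<theta>s $ j) / (if \<theta>s $ j = 0 then xi j powr (-1/q) else al j)) \<le> norm uh"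
    by (intro norm_le_componentwise_cart) (simp add: uh_def J_def)
  then show ?thesis using uh unfolding uh_def by linarith
qed

theorem theorem3:
  fixes M :: "'a measure"
    and \<Theta> :: "(real^'n) set" and \<theta>s :: "real^'n"
    and TT :: "real set"
    and H :: "real \<Rightarrow> 'a \<Rightarrow> real^'n \<Rightarrow> real"
    and \<xi> :: "real \<Rightarrow> 'a \<Rightarrow> 'n \<Rightarrow> real"
    and p :: "real \<Rightarrow> real"
    and \<theta>hat :: "real \<Rightarrow> 'a \<Rightarrow> real^'n"
    and \<alpha> :: "real \<Rightarrow> 'n \<Rightarrow> real"
    and q L :: real
  defines "U \<equiv> \<lambda>T. {u. \<theta>s + diagm (\<alpha> T) u \<in> closure \<Theta>}"
      and "Z \<equiv> \<lambda>T \<omega> u. exp (H T \<omega> (\<theta>s + diagm (\<alpha> T) u) - H T \<omega> \<theta>s)"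
      and "V \<equiv> \<lambda>T r. {u. \<theta>s + diagm (\<alpha> T) u \<in> closure \<Theta> \<and> norm u \<ge> r}"
  assumes P: "prob_space M"
    and \<Theta>: "bounded \<Theta>" "open \<Theta>" "\<theta>s \<in> \<Theta>"
    and TT: "TT \<subseteq> {0..}" "\<forall>x. \<exists>T\<in>TT. T \<ge> x"
    and H_meas: "\<forall>T\<in>TT. \<forall>\<theta>\<in>closure \<Theta>. (\<lambda>\<omega>. H T \<omega> \<theta>) \<in> borel_measurable M"
    and H_cont: "\<forall>T\<in>TT. \<forall>\<omega>\<in>space M. continuous_on (closure \<Theta>) (H T \<omega>)"
    and \<xi>_meas: "\<forall>T\<in>TT. \<forall>j. (\<lambda>\<omega>. \<xi> T \<omega> j) \<in> borel_measurable M"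
    and \<xi>_pos: "\<forall>T\<in>TT. \<forall>\<omega>\<in>space M. \<forall>j. \<xi> T \<omega> j > 0"
    and p: "\<forall>x. p x \<ge> 0" "p 0 = 0"
    and \<theta>hat_meas: "\<forall>T\<in>TT. \<theta>hat T \<in> borel_measurable M"
    and \<theta>hat_max: "\<forall>T\<in>TT. \<forall>\<omega>\<in>space M. \<theta>hat T \<omega> \<in> closure \<Theta> \<and>
        (\<forall>\<theta>\<in>closure \<Theta>. H T \<omega> \<theta> - (\<Sum>j\<in>UNIV. \<xi> T \<omega> j * p (\<theta> $ j))
           \<le> H T \<omega> (\<theta>hat T \<omega>) - (\<Sum>j\<in>UNIV. \<xi> T \<omega> j * p (\<theta>hat T \<omega> $ j)))"
    and \<alpha>_inv: "\<forall>T\<in>TT. \<forall>j. \<alpha> T j \<noteq> 0"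
    and \<alpha>_lim: "((\<lambda>T. onorm (diagm (\<alpha> T))) \<longlongrightarrow> 0) (along TT)"
    and q: "0 < q" "q \<le> 1"
    and L: "L > 0"
    and A1: "\<exists>CL>0. \<exists>\<epsilon>L. 0 < \<epsilon>L \<and> \<epsilon>L < 1 \<and> (\<forall>r>0. \<forall>T\<in>TT.
        measure M {\<omega> \<in> space M. (SUP u\<in>V T r. ereal (Z T \<omega> u)) \<ge> ereal (exp (- (r powr (2 - \<epsilon>L))))}
          \<le> CL / r powr L)"
    and A5: "\<exists>lam>0. ((\<lambda>x. p x / \<bar>x\<bar> powr q) \<longlongrightarrow> lam) (at 0)"
    and A6: "\<forall>j. \<theta>s $ j = 0 \<longrightarrow>
        to_zero_in_prob M TT (\<lambda>T \<omega>. (\<xi> T \<omega> j) powr (-1/q) * inverse \<bar>\<alpha> T j\<bar>)"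
    and A8: "\<forall>K>0. Op1 M TT (\<lambda>T \<omega>. SUP u\<in>{u \<in> U T. norm u < K}.
        ereal \<bar>H T \<omega> (\<theta>s + diagm (\<alpha> T) u) - H T \<omega> \<theta>s\<bar>)"
    and A9: "\<forall>K>0. Op1 M TT (\<lambda>T \<omega>. SUP (u,v)\<in>{(u,v). u \<in> U T \<and> v \<in> U T \<and> norm u < K \<and> norm v < K \<and> u \<noteq> v}.
        ereal (\<bar>H T \<omega> (\<theta>s + diagm (\<alpha> T) u) - H T \<omega> (\<theta>s + diagm (\<alpha> T) v)\<bar> / norm (u - v) powr q))"
    and uhat: "Op1 M TT (\<lambda>T \<omega>. ereal (norm (\<chi> j. (\<theta>hat T \<omega> $ j - \<theta>s $ j) / \<alpha> T j)))"
  shows "Op1 M TT (\<lambda>T \<omega>. ereal (norm (\<chi> j. (\<theta>hat T \<omega> $ j - \<theta>s $ j) /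
           (if \<theta>s $ j = 0 then (\<xi> T \<omega> j) powr (-1/q) else \<alpha> T j))))"
proof -
  obtain lam where "lam > 0" and lim: "((\<lambda>x. p x / \<bar>x\<bar> powr q) \<longlongrightarrow> lam) (at 0)"
    using A5 by blast
  then obtain \<delta> where "\<delta> > 0" and lower: "\<forall>x. \<bar>x\<bar> < \<delta> \<longrightarrow> lam / 2 * \<bar>x\<bar> powr q \<le> p x"
    using penalty_lower_bound_near_zero[OF lim, of "lam / 2"] p by auto
  obtain r where "r > 0" and "ball \<theta>s r \<subseteq> \<Theta>"
    using \<Theta>(2,3) open_contains_ball by blast
  then have ball: "ball \<theta>s r \<subseteq> closure \<Theta>" using closure_subset by blast
  define J where "J = {j. \<theta>s $ j = 0}"
  define Y where "Y = (\<lambda>T \<omega>. ereal (norm (\<chi> j. (\<theta>hat T \<omega> $ j - \<theta>s $ j) / \<alpha> T j)))"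
  \<comment> \<open>radius K + 1: [A9] controls the modulus on open balls, while only |u_hat| \<le> K is known\<close>
  define S where "S K T \<omega> = hoelder_modulus (\<lambda>u. H T \<omega> (\<theta>s + diagm (\<alpha> T) u))
    {u. \<theta>s + diagm (\<alpha> T) u \<in> closure \<Theta> \<and> norm u < K + 1} q" for K T \<omega>
  define R where "R j T \<omega> = \<xi> T \<omega> j powr (-1/q) * inverse \<bar>\<alpha> T j\<bar>" for j T \<omega>
  define X where "X = (\<lambda>T \<omega>. ereal (norm (\<chi> j. (\<theta>hat T \<omega> $ j - \<theta>s $ j) /
    (if \<theta>s $ j = 0 then (\<xi> T \<omega> j) powr (-1/q) else \<alpha> T j))))"
  have "Op1 M TT X"
  proof (rule Op1_from_control[OF P TT(2) finite[of J] uhat[folded Y_def], where S = S and R = R])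
    show "Op1 M TT (S K)" if "K > 0" for K
      using A9[rule_format, of "K + 1"] that
      unfolding S_def hoelder_modulus_def U_def by (simp add: conj_ac)
    show "to_zero_in_prob M TT (R j)" if "j \<in> J" for j
      using A6 that unfolding R_def J_def by blast
    show "Y T \<in> borel_measurable M" if "T \<in> TT" for T
      unfolding Y_def using \<theta>hat_meas that by (intro borel_measurable_ereal borel_measurable_norm_rescaled) auto
    show "S K T \<in> borel_measurable M" if "T \<in> TT" for K T
      unfolding S_def
    proof (rule borel_measurable_hoelder_modulus_comp[where C = "closure \<Theta>"])
      show "continuous_on {u. \<theta>s + diagm (\<alpha> T) u \<in> closure \<Theta> \<and> norm u < K + 1} (\<lambda>u. \<theta>s + diagm (\<alpha> T) u)"
        by (intro continuous_intros)
    qed (use H_cont H_meas that in auto)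
    show "R j T \<in> borel_measurable M" if "T \<in> TT" for j T
    proof -
      have [measurable]: "(\<lambda>\<omega>. \<xi> T \<omega> j) \<in> borel_measurable M" using \<xi>_meas that by blast
      show ?thesis unfolding R_def by measurable
    qed
    show "\<exists>\<eta>>0. eventually (\<lambda>T. \<forall>\<omega>\<in>space M. \<bar>Y T \<omega>\<bar> \<le> ereal K1 \<longrightarrow> \<bar>S K1 T \<omega>\<bar> \<le> ereal K2 \<longrightarrow>
        (\<forall>j\<in>J. \<bar>R j T \<omega>\<bar> \<le> \<eta>) \<longrightarrow> \<bar>X T \<omega>\<bar> \<le> ereal K1) (along TT)"
      if "K1 > 0" "K2 > 0" for K1 K2
    proof (intro exI conjI)
      define \<eta> where "\<eta> = (lam / (4 * K2)) powr (1/q) / CARD('n)"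
      show "\<eta> > 0" using \<open>lam > 0\<close> \<open>K2 > 0\<close> by (simp add: \<eta>_def)
      have "K2 * (CARD('n) * \<eta>) powr q = lam / 4"
        using \<open>lam > 0\<close> \<open>K2 > 0\<close> q by (simp add: \<eta>_def powr_powr)
      then have small: "K2 * (CARD('n) * \<eta>) powr q < lam / 2" using \<open>lam > 0\<close> by simp
      have "eventually (\<lambda>T. onorm (diagm (\<alpha> T)) < min r \<delta> / K1) (along TT)"
        using \<alpha>_lim \<open>r > 0\<close> \<open>\<delta> > 0\<close> \<open>K1 > 0\<close> by (intro order_tendstoD(2)) auto
      with eventually_along_mem show "eventually (\<lambda>T. \<forall>\<omega>\<in>space M. \<bar>Y T \<omega>\<bar> \<le> ereal K1 \<longrightarrow>
        \<bar>S K1 T \<omega>\<bar> \<le> ereal K2 \<longrightarrow> (\<forall>j\<in>J. \<bar>R j T \<omega>\<bar> \<le> \<eta>) \<longrightarrow> \<bar>X T \<omega>\<bar> \<le> ereal K1) (along TT)"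
      proof eventually_elim
        case (elim T)
        show ?case
        proof (intro ballI impI)
          fix \<omega> assume \<omega>: "\<omega> \<in> space M" and uh: "\<bar>Y T \<omega>\<bar> \<le> ereal K1"
            and "\<bar>S K1 T \<omega>\<bar> \<le> ereal K2" and ratio: "\<forall>j\<in>J. \<bar>R j T \<omega>\<bar> \<le> \<eta>"
          then have hoelder: "S K1 T \<omega> \<le> ereal K2" by (cases "S K1 T \<omega>") auto
          have scale: "onorm (diagm (\<alpha> T)) * K1 < min r \<delta>"
            using elim(2) \<open>K1 > 0\<close> by (simp add: less_divide_eq)
          have "\<forall>j. \<theta>s $ j = 0 \<longrightarrow> \<xi> T \<omega> j powr (-1/q) * inverse \<bar>\<alpha> T j\<bar> \<le> \<eta>"
            using ratio unfolding R_def J_def by simp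
          from rescaled_penalized_maximizer_norm_le[OF _ _ _ _ ball lower p(2) scale _ _
              hoelder[unfolded S_def] this small _ q(1)]
          have "norm (\<chi> j. (\<theta>hat T \<omega> $ j - \<theta>s $ j) /
              (if \<theta>s $ j = 0 then \<xi> T \<omega> j powr (-1/q) else \<alpha> T j)) \<le> K1"
            using \<theta>hat_max \<alpha>_inv \<xi>_pos elim(1) \<omega> uh \<open>K2 > 0\<close> by (simp add: Y_def)
          then show "\<bar>X T \<omega>\<bar> \<le> ereal K1" by (simp add: X_def)
        qed
      qed
    qed
  qed
  then show ?thesis unfolding X_def .
qed

end
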